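(* Let $r,i\in\mathbb{Z}$ and $\beta\in\Bbbk^*$. Then for all $0\le l\le k$, $$c_\beta^{r,i}(k,l)=\lambda_\beta^i(k,l)\,y^{k-l}x^rg^{i-k}.$$
   Context: $\Bbbk$ is an algebraically closed field of characteristic $0$; $n,w$ positive integers, $\gamma$ a primitive $n$-th root of unity. $H=B(n,w,\gamma)$ is the Hopf algebra generated by $x^{\pm1},g,y$ with relations $xx^{-1}=x^{-1}x=1$, $xg=gx$, $xy=yx$, $yg=\gamma gy$, $y^n=1-x^w=1-g^n$, with $\Delta(x)=x\otimes x$, $\Delta(g)=g\otimes g$, $\Delta(y)=y\otimes g+1\otimes y$, $\varepsilon(x)=\varepsilon(g)=1$, $\varepsilon(y)=0$, $S(x)=x^{-1}$, $S(g)=g^{-1}$, $S(y)=-yg^{-1}$. The elements $c_\beta^{r,i}(k,l)\in H$ ($0\le l\le k$) are defined by $c_\beta^{r,i}(0,0)=x^rg^i$ and, for $k\ge0$: $c_\beta^{r,i}(k+1,0)=c_\beta^{r,i}(k,0)S(y)+\beta yc_\beta^{r,i}(k,0)S(g)$; for $0<l<k+1$, $c_\beta^{r,i}(k+1,l)=c_\beta^{r,i}(k,l)S(y)+\beta\gamma^{-l}yc_\beta^{r,i}(k,l)S(g)+c_\beta^{r,i}(k,l-1)S(g)$; $c_\beta^{r,i}(k+1,k+1)=c_\beta^{r,i}(k,k)S(g)$. The scalars: $R_\beta^i(k,l)=\beta\gamma^{-l}-\gamma^{k-1-i}$ for $0\le l<k$ and $R_\beta^i(k,k)=1$; $\lambda_\beta^i(0,0)=1$,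 and for $k\ge1$: $\lambda_\beta^i(k,0)=R_\beta^i(k,0)\lambda_\beta^i(k-1,0)$, $\lambda_\beta^i(k,l)=R_\beta^i(k,l)\lambda_\beta^i(k-1,l)+\lambda_\beta^i(k-1,l-1)$ for $0<l<k$, $\lambda_\beta^i(k,k)=1$. *)

theory Defs
  imports "HOL-Computational_Algebra.Polynomial"
begin

definition alg_closed :: "'k::field itself \<Rightarrow> bool" where
  "alg_closed _ \<longleftrightarrow> (\<forall>p::'k poly. degree p > 0 \<longrightarrow> (\<exists>z. poly p z = 0))"

text \<open>Integer powers of an invertible element z with given inverse zi.\<close>
definition zpow :: "'a::ring_1 \<Rightarrow> 'a \<Rightarrow> int \<Rightarrow> 'a" where
  "zpow z zi m = (if 0 \<le> m then z ^ nat m else zi ^ nat (- m))"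

text \<open>A (unital, associative) \<open>\<Bbbk>\<close>-algebra A is a ring with a ring homomorphism
  phi from \<open>\<Bbbk>\<close> into the centre of A; scalar multiplication is  phi c * a.\<close>
definition kalg_struct :: "('k::field \<Rightarrow> 'a::ring_1) \<Rightarrow> bool" where
  "kalg_struct phi \<longleftrightarrow> phi 1 = 1 \<and> (\<forall>a b. phi (a + b) = phi a + phi b)
     \<and> (\<forall>a b. phi (a * b) = phi a * phi b) \<and> (\<forall>a z. phi a * z = z * phi a)"

text \<open>Elements x, xi = x^{-1}, g, gi = g^{-1}, y of a \<open>\<Bbbk>\<close>-algebra satisfying the defining
  relations of B(n,w,\<gamma>).  (Since g^n = x^w with x invertible, g is invertible in
  B(n,w,\<gamma>); gi denotes its inverse, which is S(g).)  Any statement of the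
  form "an identity holds for these elements for every such tuple in every
  \<open>\<Bbbk>\<close>-algebra" is equivalent to the identity in B(n,w,\<gamma>) itself, by the universal
  property of the presentation.\<close>
definition B_rels :: "('k::field \<Rightarrow> 'a::ring_1) \<Rightarrow> nat \<Rightarrow> nat \<Rightarrow> 'k \<Rightarrow>
    'a \<Rightarrow> 'a \<Rightarrow> 'a \<Rightarrow> 'a \<Rightarrow> 'a \<Rightarrow> bool" where
  "B_rels phi n w \<gamma> x xi g gi y \<longleftrightarrow>
     kalg_struct phi \<and>
     x * xi = 1 \<and> xi * x = 1 \<and> g * gi = 1 \<and> gi * g = 1 \<and>
     x * g = g * x \<and> x * y = y * x \<and> y * g = phi \<gamma> * (g * y) \<and>
     y ^ n = 1 - x ^ w \<and> y ^ n = 1 - g ^ n"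

text \<open>The elements c_\<beta>^{r,i}(k,l), with base = x^r g^i, S(y) = - y gi, S(g) = gi.
  Values for l > k are irrelevant (set to 0).\<close>
fun cfun :: "('k::field \<Rightarrow> 'a::ring_1) \<Rightarrow> 'k \<Rightarrow> 'k \<Rightarrow> 'a \<Rightarrow> 'a \<Rightarrow> 'a \<Rightarrow> nat \<Rightarrow> nat \<Rightarrow> 'a" where
  "cfun phi \<gamma> \<beta> gi y base 0 l = (if l = 0 then base else 0)"
| "cfun phi \<gamma> \<beta> gi y base (Suc k) l =
     (if l = 0 then cfun phi \<gamma> \<beta> gi y base k 0 * (- (y * gi))
                    + phi \<beta> * y * cfun phi \<gamma> \<beta> gi y base k 0 * gi
      else if l < Suc k then cfun phi \<gamma> \<beta> gi y base k l * (- (y * gi))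
                    + phi (\<beta> * inverse \<gamma> ^ l) * y * cfun phi \<gamma> \<beta> gi y base k l * gi
                    + cfun phi \<gamma> \<beta> gi y base k (l - 1) * gi
      else if l = Suc k then cfun phi \<gamma> \<beta> gi y base k k * gi
      else 0)"

definition Rsc :: "'k::field \<Rightarrow> 'k \<Rightarrow> int \<Rightarrow> nat \<Rightarrow> nat \<Rightarrow> 'k" where
  "Rsc \<gamma> \<beta> i k l = (if l < k then \<beta> * power_int \<gamma> (- int l) - power_int \<gamma> (int k - 1 - i)
                    else if l = k then 1 else 0)"

text \<open>\<lambda>_\<beta>^i(k,l); values for l > k irrelevant (set to 0).\<close>
fun lam :: "'k::field \<Rightarrow> 'k \<Rightarrow> int \<Rightarrow> nat \<Rightarrow> nat \<Rightarrow> 'k" where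
  "lam \<gamma> \<beta> i 0 l = (if l = 0 then 1 else 0)"
| "lam \<gamma> \<beta> i (Suc k) l =
     (if l = 0 then Rsc \<gamma> \<beta> i (Suc k) 0 * lam \<gamma> \<beta> i k 0
      else if l < Suc k then Rsc \<gamma> \<beta> i (Suc k) l * lam \<gamma> \<beta> i k l + lam \<gamma> \<beta> i k (l - 1)
      else if l = Suc k then 1 else 0)"

end

theory Submission
  imports Defs
begin

text \<open>Every term produced by the recursion for c(k,l) is a scalar multiple of the single
  monomial y^(k-l) x^r g^(i-k): right multiplication by S(g) = g^(-1) lowers the exponent of g,
  and right multiplication by S(y) = -y g^(-1) (or left multiplication by y) raises the
  exponent of y, the former at the price of the scalar \<gamma>^(k-i) picked up by moving y to the
  left past g^(i-k).  Comparing coefficients, the scalars obey exactly the recursion defining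
  \<lambda>(k,l), with R(k+1,l) = \<beta>\<gamma>^(-l) - \<gamma>^(k-i).\<close>

lemma lam_Suc_0:
  "lam \<gamma> \<beta> i (Suc k) 0 = (\<beta> - power_int \<gamma> (int k - i)) * lam \<gamma> \<beta> i k 0"
  by (simp add: Rsc_def)

lemma lam_Suc:
  fixes \<gamma> :: "'k::field"
  assumes "0 < l" "l \<le> k"
  shows "lam \<gamma> \<beta> i (Suc k) l
    = (\<beta> * inverse \<gamma> ^ l - power_int \<gamma> (int k - i)) * lam \<gamma> \<beta> i k l + lam \<gamma> \<beta> i k (l - 1)"
  using assms by (simp add: Rsc_def power_int_minus power_inverse)

lemma lam_diag: "lam \<gamma> \<beta> i k k = 1"
  by (cases k) auto

lemma inverse_commute:
  fixes z zi a :: "'a::ring_1"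
  assumes "z * zi = 1" "zi * z = 1" "z * a = a * z"
  shows "zi * a = a * zi"
proof -
  have "zi * a = zi * (a * z) * zi"
    by (simp add: mult.assoc assms(1))
  also have "\<dots> = (zi * z) * a * zi"
    by (simp only: assms(3) mult.assoc)
  finally show ?thesis
    by (simp add: assms(2))
qed

lemma zpow_commute:
  fixes z zi a :: "'a::ring_1"
  assumes "z * a = a * z" "zi * a = a * zi"
  shows "zpow z zi m * a = a * zpow z zi m"
  using assms by (simp add: zpow_def power_commuting_commutes)

lemma zpow_mult_inverse:
  fixes z zi :: "'a::ring_1"
  assumes "z * zi = 1"
  shows "zpow z zi m * zi = zpow z zi (m - 1)"
proof (cases "1 \<le> m")
  case True
  then have "nat m = Suc (nat (m - 1))"
    by simp
  with True have "zpow z zi m * zi = z ^ nat (m - 1) * (z * zi)"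
    by (simp add: zpow_def power_Suc2 mult.assoc del: power_Suc)
  with True show ?thesis
    by (simp add: zpow_def assms)
next
  case False
  then have "nat (1 - m) = Suc (nat (- m))"
    by simp
  with False show ?thesis
    by (simp add: zpow_def power_Suc2 power_commutes)
qed

locale kalgebra =
  fixes phi :: "'k::field \<Rightarrow> 'a::ring_1"
  assumes kalg_struct: "kalg_struct phi"
begin

lemma phi_one: "phi 1 = 1"
  and phi_add: "phi (a + b) = phi a + phi b"
  and phi_mult: "phi (a * b) = phi a * phi b"
  and phi_central: "phi a * z = z * phi a"
  using kalg_struct unfolding kalg_struct_def by blast+

lemma phi_zero: "phi 0 = 0"
  using phi_add[of 0 0] by simp

lemma phi_uminus: "phi (- a) = - phi a"
  using phi_add[of a "- a"] by (simp add: phi_zero add.inverse_unique)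

lemma mult_phi_left_commute: "z * (phi c * u) = phi c * (z * u)"
  by (metis mult.assoc phi_central)

lemma power_skew_commute:
  assumes "u * y = phi c * (y * u)"
  shows "u ^ j * y = phi (c ^ j) * (y * u ^ j)"
proof (induction j)
  case 0
  then show ?case by (simp add: phi_one)
next
  case (Suc j)
  have "u ^ Suc j * y = u ^ j * (u * y)"
    by (simp only: power_Suc2 mult.assoc)
  also have "\<dots> = phi c * (u ^ j * y * u)"
    by (simp only: assms mult_phi_left_commute[of "u ^ j"] mult.assoc)
  also have "\<dots> = phi c * phi (c ^ j) * (y * u ^ Suc j)"
    by (simp only: Suc power_Suc2 mult.assoc)
  finally show ?case
    by (simp only: phi_mult power_Suc)
qed

end

text \<open>\<open>X\<close> stands for x^r, which commutes with y; \<open>mon a p m\<close> is the monomial a y^p x^r g^m.\<close>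

locale skew_monomials = kalgebra phi for phi :: "'k::field \<Rightarrow> 'a::ring_1" +
  fixes \<gamma> :: 'k and g gi y X :: 'a
  assumes gamma_nonzero: "\<gamma> \<noteq> 0"
    and g_gi: "g * gi = 1" and gi_g: "gi * g = 1"
    and y_g: "y * g = phi \<gamma> * (g * y)"
    and X_y: "X * y = y * X"
begin

definition mon :: "'k \<Rightarrow> nat \<Rightarrow> int \<Rightarrow> 'a" where
  "mon a p m = phi a * y ^ p * X * zpow g gi m"

lemma g_y: "g * y = phi (inverse \<gamma>) * (y * g)"
proof -
  have "phi (inverse \<gamma>) * phi \<gamma> = 1"
    using gamma_nonzero by (simp add: phi_one flip: phi_mult)
  then show ?thesis
    by (simp add: y_g flip: mult.assoc)
qed

lemma gi_y: "gi * y = phi \<gamma> * (y * gi)"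
proof -
  have "gi * y = gi * (y * g) * gi"
    by (simp add: mult.assoc g_gi)
  also have "\<dots> = phi \<gamma> * ((gi * g) * y * gi)"
    by (simp add: y_g mult_phi_left_commute mult.assoc)
  finally show ?thesis
    by (simp add: gi_g)
qed

lemma zpow_g_y: "zpow g gi m * y = phi (power_int \<gamma> (- m)) * (y * zpow g gi m)"
proof (cases "0 \<le> m")
  case True
  then have "power_int \<gamma> (- m) = inverse \<gamma> ^ nat m"
    by (metis nat_0_le power_int_inverse power_int_minus power_int_of_nat)
  with True show ?thesis
    by (simp add: zpow_def power_skew_commute[OF g_y])
next
  case False
  then have "power_int \<gamma> (- m) = \<gamma> ^ nat (- m)"
    by (simp add: power_int_def)
  with False show ?thesis
    by (simp add: zpow_def power_skew_commute[OF gi_y])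
qed

lemma mon_mult_gi: "mon a p m * gi = mon a p (m - 1)"
  by (simp add: mon_def mult.assoc zpow_mult_inverse g_gi)

lemma mon_mult_antipode_y:
  "mon a p m * (- (y * gi)) = mon (- a * power_int \<gamma> (- m)) (Suc p) (m - 1)"
proof -
  let ?q = "power_int \<gamma> (- m)"
  have "mon a p m * (y * gi) = phi a * (y ^ p * X * (zpow g gi m * y)) * gi"
    by (simp add: mon_def mult.assoc)
  also have "\<dots> = phi a * (y ^ p * X * (phi ?q * (y * zpow g gi m))) * gi"
    by (simp only: zpow_g_y)
  also have "\<dots> = phi a * (phi ?q * (y ^ p * X * (y * zpow g gi m))) * gi"
    by (simp only: mult_phi_left_commute[of "y ^ p * X"])
  also have "\<dots> = phi a * phi ?q * (y ^ p * (X * y)) * (zpow g gi m * gi)"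
    by (simp only: mult.assoc)
  also have "\<dots> = mon (a * ?q) (Suc p) (m - 1)"
    by (simp only: mon_def X_y phi_mult zpow_mult_inverse[OF g_gi] power_Suc2 mult.assoc)
  finally show ?thesis
    by (simp add: mon_def phi_uminus)
qed

lemma phi_y_mult_mon_mult_gi: "phi b * y * mon a p m * gi = mon (b * a) (Suc p) (m - 1)"
proof -
  have "phi b * y * mon a p m * gi = phi b * (y * phi a) * y ^ p * X * (zpow g gi m * gi)"
    by (simp add: mon_def mult.assoc)
  also have "\<dots> = mon (b * a) (Suc p) (m - 1)"
    by (simp only: mon_def phi_central[of a y, symmetric] phi_mult zpow_mult_inverse[OF g_gi]
        power_Suc mult.assoc)
  finally show ?thesis .
qed

lemma mon_add: "mon a p m + mon b p m = mon (a + b) p m"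
  by (simp add: mon_def phi_add distrib_right)

lemma cfun_eq_mon:
  assumes "l \<le> k"
  shows "cfun phi \<gamma> \<beta> gi y (X * zpow g gi i) k l = mon (lam \<gamma> \<beta> i k l) (k - l) (i - int k)"
  using assms
proof (induction k arbitrary: l)
  case 0
  then show ?case by (simp add: mon_def phi_one)
next
  case (Suc k)
  let ?c = "cfun phi \<gamma> \<beta> gi y (X * zpow g gi i) k"
  consider "l = 0" | "0 < l" "l \<le> k" | "l = Suc k"
    using Suc.prems by linarith
  then show ?case
  proof cases
    case 1
    have IH: "?c 0 = mon (lam \<gamma> \<beta> i k 0) k (i - int k)"
      using Suc.IH[of 0] by simp
    have "cfun phi \<gamma> \<beta> gi y (X * zpow g gi i) (Suc k) l
        = ?c 0 * (- (y * gi)) + phi \<beta> * y * ?c 0 * gi"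
      using 1 by simp
    also have "\<dots> = mon (- lam \<gamma> \<beta> i k 0 * power_int \<gamma> (- (i - int k)) + \<beta> * lam \<gamma> \<beta> i k 0)
                      (Suc k) (i - int k - 1)"
      by (simp only: IH mon_mult_antipode_y phi_y_mult_mon_mult_gi mon_add)
    also have "\<dots> = mon (lam \<gamma> \<beta> i (Suc k) l) (Suc k - l) (i - int (Suc k))"
      unfolding 1 lam_Suc_0 by (simp add: algebra_simps)
    finally show ?thesis .
  next
    case 2
    have degree: "Suc k - l = Suc (k - l)" "k - (l - 1) = Suc (k - l)"
      using 2 by auto
    have IH: "?c l = mon (lam \<gamma> \<beta> i k l) (k - l) (i - int k)"
      "?c (l - 1) = mon (lam \<gamma> \<beta> i k (l - 1)) (Suc (k - l)) (i - int k)"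
      using Suc.IH[of l] Suc.IH[of "l - 1"] 2 degree by simp_all
    have "cfun phi \<gamma> \<beta> gi y (X * zpow g gi i) (Suc k) l
        = ?c l * (- (y * gi)) + phi (\<beta> * inverse \<gamma> ^ l) * y * ?c l * gi + ?c (l - 1) * gi"
      using 2 by simp
    also have "\<dots> = mon (- lam \<gamma> \<beta> i k l * power_int \<gamma> (- (i - int k))
                        + \<beta> * inverse \<gamma> ^ l * lam \<gamma> \<beta> i k l + lam \<gamma> \<beta> i k (l - 1))
                      (Suc (k - l)) (i - int k - 1)"
      by (simp only: IH mon_mult_antipode_y phi_y_mult_mon_mult_gi mon_mult_gi mon_add)
    also have "\<dots> = mon (lam \<gamma> \<beta> i (Suc k) l) (Suc k - l) (i - int (Suc k))"
      using 2 by (simp only: lam_Suc) (simp add: degree algebra_simps)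
    finally show ?thesis .
  qed (simp add: Suc.IH lam_diag phi_one mon_mult_gi algebra_simps)
qed

end

theorem proposition3p11:
  fixes phi :: "'k::field_char_0 \<Rightarrow> 'a::ring_1"
    and n w :: nat and \<gamma> \<beta> :: 'k and x xi g gi y :: 'a and r i :: int and k l :: nat
  assumes "alg_closed TYPE('k)"
    and "n > 0" and "w > 0"
    and "\<gamma> ^ n = 1" and "\<forall>m. 0 < m \<and> m < n \<longrightarrow> \<gamma> ^ m \<noteq> 1"
    and "B_rels phi n w \<gamma> x xi g gi y"
    and "\<beta> \<noteq> 0"
    and "l \<le> k"
  shows "cfun phi \<gamma> \<beta> gi y (zpow x xi r * zpow g gi i) k l
         = phi (lam \<gamma> \<beta> i k l) * y ^ (k - l) * zpow x xi r * zpow g gi (i - int k)"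
proof -
  note rels = assms(6)[unfolded B_rels_def]
  have "\<gamma> \<noteq> 0"
    using assms(2,4) by (metis power_0_left less_not_refl2 zero_neq_one)
  moreover have "zpow x xi r * y = y * zpow x xi r"
    using rels by (metis zpow_commute inverse_commute)
  ultimately interpret skew_monomials phi \<gamma> g gi y "zpow x xi r"
    using rels by unfold_locales (simp_all add: kalgebra_def)
  show ?thesis
    using cfun_eq_mon[OF assms(8)] by (simp add: mon_def)
qed

end
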